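(* Let $\mathbb{X}$ be a real or complex Banach algebra with identity, $\mathcal{G}$ its group of units, $k\ge1$ an integer, and $g_n:\mathbb{X}\to\mathbb{X}$ ($n\ge0$) functions with $|g_n(\xi)|\le\sigma|\xi|$ for all $\xi\in\mathbb{X}$, all $n$, for some real $\sigma>0$. Let $a_0,\dots,a_k\in\mathbb{X}$ with $a_k\ne0$ and $b\in\mathcal{G}$ with $|b|<1$. Suppose $$a_0b^k+a_1b^{k-1}+\cdots+a_k=b^{k+1}$$ and $$\sum_{i=0}^{k-1}\big|b^{i+1}-a_0b^i-a_1b^{i-1}-\cdots-a_i\big|<1-\sigma.$$ Then every solution of $$x_{n+1}=a_0x_n+a_1x_{n-1}+\cdots+a_kx_{n-k}+g_n(x_n-bx_{n-1}),\quad n\ge0,$$ with initial values in $\mathbb{X}$ converges to $0$.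
   Context: A Banach algebra with identity is a Banach space $\mathbb{X}$ (norm $|\cdot|$) with an associative bilinear multiplication satisfying $|xy|\le|x||y|$ and identity $1$ with $|1|=1$; $\mathcal{G}$ is the set of invertible elements. *)

theory Defs
  imports "HOL-Analysis.Analysis"
begin

end

theory Submission imports Defs begin

(* Put y_n = x_n - b x_(n-1).  The characteristic relation
   a_0 b^k + ... + a_k = b^(k+1) says that b is a right root of the linear part
   of the recurrence, so the linear part factors through the difference y:
   with the defects d_i = a_0 b^i + ... + a_i - b^(i+1) (note d_k = 0),
   y_(n+1) = d_0 y_n + ... + d_(k-1) y_(n-k+1) + g_n(y_n).
   Taking norms gives a scalar recurrence inequality whose coefficients
   |d_0| + sigma, |d_1|, ..., |d_(k-1)| sum to less than 1, hence |y_n| decays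
   geometrically.  Finally x_(n+1) = b x_n + y_(n+1) with |b| < 1 is a contraction
   perturbed by a geometrically small term, so x_n tends to 0.
   The file first treats the algebra (defects and a telescoping identity, valid in
   any ring), then the two real-valued decay lemmas, and derives the corollary. *)

definition char_defect :: "(nat \<Rightarrow> 'a::ring_1) \<Rightarrow> 'a \<Rightarrow> nat \<Rightarrow> 'a" where
  "char_defect a b i = (\<Sum>j\<le>i. a j * b ^ (i - j)) - b ^ (i + 1)"

lemma char_defect_Suc: "char_defect a b (Suc i) = char_defect a b i * b + a (Suc i)"
proof -
  have "(\<Sum>j\<le>i. a j * b ^ (i - j)) * b = (\<Sum>j\<le>i. a j * b ^ (Suc i - j))"
    unfolding sum_distrib_right
  proof (rule sum.cong[OF refl])
    fix j assume "j \<in> {..i}"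
    then have "Suc i - j = Suc (i - j)" by auto
    then show "a j * b ^ (i - j) * b = a j * b ^ (Suc i - j)"
      by (simp add: mult.assoc power_commutes)
  qed
  then show ?thesis
    unfolding char_defect_def by (simp add: algebra_simps power_commutes)
qed

lemma defect_telescoping:
  fixes x :: "int \<Rightarrow> 'a::ring_1"
  shows "(\<Sum>i<K. char_defect a b i * (x (n - int i) - b * x (n - int i - 1)))
       = (\<Sum>j\<le>K. a j * x (n - int j)) - b * x n - char_defect a b K * x (n - int K)"
proof (induction K)
  case 0
  then show ?case by (simp add: char_defect_def algebra_simps)
next
  case (Suc K)
  have "n - int (Suc K) = n - int K - 1" by simp
  then show ?case using Suc by (simp add: char_defect_Suc algebra_simps)
qed

lemma difference_recurrence:
  fixes x :: "int \<Rightarrow> 'a::ring_1"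
  assumes char: "char_defect a b k = 0"
    and rec: "x (int n + 1) = (\<Sum>j\<le>k. a j * x (int n - int j)) + g n (x (int n) - b * x (int n - 1))"
  shows "x (int n + 1) - b * x (int n)
       = (\<Sum>i<k. char_defect a b i * (x (int n - int i) - b * x (int n - int i - 1)))
         + g n (x (int n) - b * x (int n - 1))"
  unfolding defect_telescoping char rec by simp

lemma recurrence_inequality_geometric_decay:
  fixes w \<alpha> :: "nat \<Rightarrow> real"
  assumes k: "k \<ge> 1" and w_nonneg: "\<And>m. w m \<ge> 0" and \<alpha>_nonneg: "\<And>i. \<alpha> i \<ge> 0"
    and \<alpha>_sum: "(\<Sum>i<k. \<alpha> i) < 1"
    and rec: "\<And>m. m \<ge> k - 1 \<Longrightarrow> w (Suc m) \<le> (\<Sum>i<k. \<alpha> i * w (m - i))"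
  shows "\<exists>C \<rho>. 0 < \<rho> \<and> \<rho> < 1 \<and> C \<ge> 0 \<and> (\<forall>m. w m \<le> C * \<rho> ^ m)"
proof -
  define \<theta> where "\<theta> = (\<Sum>i<k. \<alpha> i)"
  have \<theta>_nonneg: "\<theta> \<ge> 0" unfolding \<theta>_def using \<alpha>_nonneg by (simp add: sum_nonneg)
  define \<rho> where "\<rho> = max (1/2) (root k \<theta>)"
  have \<rho>_pos: "\<rho> > 0" and \<rho>_lt1: "\<rho> < 1"
    unfolding \<rho>_def using k \<alpha>_sum \<theta>_nonneg by (auto simp: \<theta>_def real_root_lt_1_iff)
  have \<theta>_le: "\<theta> \<le> \<rho> ^ k"
  proof -
    have "\<theta> = root k \<theta> ^ k" using k \<theta>_nonneg by simp
    also have "\<dots> \<le> \<rho> ^ k"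
      unfolding \<rho>_def using \<theta>_nonneg by (intro power_mono) (auto simp: real_root_ge_zero)
    finally show ?thesis .
  qed
  define C where "C = (\<Sum>m<k. w m / \<rho> ^ m)"
  have C_nonneg: "C \<ge> 0" unfolding C_def using w_nonneg \<rho>_pos by (simp add: sum_nonneg)
  have "w m \<le> C * \<rho> ^ m" for m
  proof (induction m rule: less_induct)
    case (less m)
    show ?case
    proof (cases "m < k")
      case True
      have "w m / \<rho> ^ m \<le> C" unfolding C_def
        by (rule member_le_sum[where f="\<lambda>m. w m / \<rho> ^ m"]) (use True w_nonneg \<rho>_pos in auto)
      then show ?thesis using \<rho>_pos by (simp add: divide_le_eq)
    next
      case False
      define m' where "m' = m - 1"
      have m: "m = Suc m'" "m' \<ge> k - 1" using False k unfolding m'_def by arith+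
      have "w m \<le> (\<Sum>i<k. \<alpha> i * w (m' - i))" using rec[OF m(2)] m(1) by simp
      also have "\<dots> \<le> (\<Sum>i<k. \<alpha> i * (C * \<rho> ^ (m - k)))"
      proof (rule sum_mono)
        fix i assume "i \<in> {..<k}"
        then have "m - k \<le> m' - i" using m by auto
        then have "\<rho> ^ (m' - i) \<le> \<rho> ^ (m - k)" using \<rho>_pos \<rho>_lt1 by (intro power_decreasing) auto
        moreover have "w (m' - i) \<le> C * \<rho> ^ (m' - i)" using less m(1) by simp
        ultimately have "w (m' - i) \<le> C * \<rho> ^ (m - k)"
          using C_nonneg by (meson mult_left_mono order_trans)
        then show "\<alpha> i * w (m' - i) \<le> \<alpha> i * (C * \<rho> ^ (m - k))" using \<alpha>_nonneg by (rule mult_left_mono)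
      qed
      also have "\<dots> = \<theta> * (C * \<rho> ^ (m - k))" unfolding \<theta>_def by (simp add: sum_distrib_right)
      also have "\<dots> \<le> \<rho> ^ k * (C * \<rho> ^ (m - k))"
        using \<theta>_le C_nonneg \<rho>_pos by (intro mult_right_mono) auto
      also have "\<dots> = C * \<rho> ^ m" using False by (simp add: power_add[symmetric])
      finally show ?thesis .
    qed
  qed
  then show ?thesis using \<rho>_pos \<rho>_lt1 C_nonneg by blast
qed

lemma perturbed_contraction_tendsto_zero:
  fixes u :: "nat \<Rightarrow> real"
  assumes \<beta>: "0 \<le> \<beta>" "\<beta> < 1" and \<rho>: "0 \<le> \<rho>" "\<rho> < 1" and C: "C \<ge> 0"
    and u_nonneg: "\<And>n. u n \<ge> 0"
    and rec: "\<And>n. u (Suc n) \<le> \<beta> * u n + C * \<rho> ^ n"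
  shows "u \<longlonglongrightarrow> 0"
proof -
  define \<tau> where "\<tau> = (1 + max \<beta> \<rho>) / 2"
  have \<tau>: "\<beta> < \<tau>" "\<rho> \<le> \<tau>" "\<tau> < 1" unfolding \<tau>_def using \<beta> \<rho> by auto
  define D where "D = max (u 0) (C / (\<tau> - \<beta>))"
  have D_gap: "C \<le> D * (\<tau> - \<beta>)"
    using \<tau> by (simp add: D_def pos_divide_le_eq[symmetric])
  have bound: "u n \<le> D * \<tau> ^ n" for n
  proof (induction n)
    case 0
    then show ?case unfolding D_def by simp
  next
    case (Suc n)
    have "\<rho> ^ n \<le> \<tau> ^ n" using \<rho> \<tau> by (intro power_mono) auto
    then have "C * \<rho> ^ n \<le> D * (\<tau> - \<beta>) * \<tau> ^ n"
      using C D_gap \<tau> by (meson mult_mono order_trans zero_le_power \<rho>(1) order_refl)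
    moreover have "\<beta> * u n \<le> \<beta> * (D * \<tau> ^ n)" using Suc \<beta>(1) by (rule mult_left_mono)
    ultimately have "u (Suc n) \<le> \<beta> * (D * \<tau> ^ n) + D * (\<tau> - \<beta>) * \<tau> ^ n"
      using rec[of n] by linarith
    also have "\<dots> = D * \<tau> ^ Suc n" by (simp add: algebra_simps)
    finally show ?case .
  qed
  have "(\<lambda>n. D * \<tau> ^ n) \<longlonglongrightarrow> 0"
    using \<tau> \<beta> by (intro tendsto_mult_right_zero LIMSEQ_power_zero) auto
  then show ?thesis
    by (rule Lim_null_comparison[rotated]) (use bound u_nonneg in simp)
qed

text \<open>Norm form of the difference recurrence, shifted so that all indices are
  nonnegative: with w(m) = |y(m - k + 1)|, the extra term g contributes sigma to the
  leading coefficient.\<close>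
lemma shifted_norm_recurrence:
  fixes y :: "int \<Rightarrow> 'a::real_normed_algebra" and d :: "nat \<Rightarrow> 'a"
  assumes k: "k \<ge> 1" and g_bound: "\<And>n \<xi>. norm (g n \<xi>) \<le> \<sigma> * norm \<xi>"
    and rec: "\<And>n::nat. y (int n + 1) = (\<Sum>i<k. d i * y (int n - int i)) + g n (y (int n))"
    and m: "m \<ge> k - 1"
  defines "w \<equiv> \<lambda>m::nat. norm (y (int m - int k + 1))"
  shows "w (Suc m) \<le> (\<Sum>i<k. (norm (d i) + (if i = 0 then \<sigma> else 0)) * w (m - i))"
proof -
  define n where "n = m - (k - 1)"
  have shift: "int n - int i = int (m - i) - int k + 1" if "i < k" for i
    using that m k unfolding n_def by auto
  have "w (Suc m) = norm (y (int n + 1))"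
    unfolding w_def using m k by (simp add: n_def of_nat_diff algebra_simps)
  also have "\<dots> \<le> (\<Sum>i<k. norm (d i * y (int n - int i))) + norm (g n (y (int n)))"
    unfolding rec using norm_triangle_ineq norm_sum add_right_mono order_trans by blast
  also have "\<dots> \<le> (\<Sum>i<k. norm (d i) * w (m - i)) + \<sigma> * w m"
  proof (rule add_mono)
    show "(\<Sum>i<k. norm (d i * y (int n - int i))) \<le> (\<Sum>i<k. norm (d i) * w (m - i))"
      by (rule sum_mono) (simp add: w_def shift norm_mult_ineq)
    show "norm (g n (y (int n))) \<le> \<sigma> * w m"
      using g_bound shift[of 0] k by (simp add: w_def)
  qed
  also have "\<dots> = (\<Sum>i<k. (norm (d i) + (if i = 0 then \<sigma> else 0)) * w (m - i))"
    using k by (simp add: distrib_right sum.distrib if_distrib[of "\<lambda>c. c * _"] cong: if_cong)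
  finally show ?thesis .
qed

theorem corollary2:
  fixes a :: "nat \<Rightarrow> 'a::{real_normed_algebra_1, banach}"
    and b :: "'a"
    and g :: "nat \<Rightarrow> 'a \<Rightarrow> 'a"
    and x :: "int \<Rightarrow> 'a"
    and k :: nat and \<sigma> :: real
  assumes "k \<ge> 1"
    and "\<sigma> > 0"
    and "\<And>n \<xi>. norm (g n \<xi>) \<le> \<sigma> * norm \<xi>"
    and "a k \<noteq> 0"
    and "\<exists>c. b * c = 1 \<and> c * b = 1"
    and "norm b < 1"
    and "(\<Sum>j\<le>k. a j * b ^ (k - j)) = b ^ (k + 1)"
    and "(\<Sum>i<k. norm (b ^ (i + 1) - (\<Sum>j\<le>i. a j * b ^ (i - j)))) < 1 - \<sigma>"
    and "\<And>n::nat. x (int n + 1) =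
           (\<Sum>j\<le>k. a j * x (int n - int j)) + g n (x (int n) - b * x (int n - 1))"
  shows "(\<lambda>n. x (int n)) \<longlonglongrightarrow> 0"
proof -
  note k = assms(1) and \<sigma> = assms(2) and g_bound = assms(3) and b_small = assms(6)
  define y where "y n = x n - b * x (n - 1)" for n
  define w where "w m = norm (y (int m - int k + 1))" for m
  define \<alpha> where "\<alpha> i = norm (char_defect a b i) + (if i = 0 then \<sigma> else 0)" for i
  have "char_defect a b k = 0" using assms(7) by (simp add: char_defect_def)
  then have y_rec: "y (int n + 1) = (\<Sum>i<k. char_defect a b i * y (int n - int i)) + g n (y (int n))"
    for n using difference_recurrence[of a b k x n g] assms(9) by (simp add: y_def diff_diff_eq add.commute)
  have "(\<Sum>i<k. \<alpha> i) = (\<Sum>i<k. norm (b ^ (i + 1) - (\<Sum>j\<le>i. a j * b ^ (i - j)))) + \<sigma>"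
    using k by (simp add: \<alpha>_def sum.distrib char_defect_def norm_minus_commute)
  then have \<alpha>_sum: "(\<Sum>i<k. \<alpha> i) < 1" using assms(8) by simp
  have w_rec: "w (Suc m) \<le> (\<Sum>i<k. \<alpha> i * w (m - i))" if "m \<ge> k - 1" for m
    using shifted_norm_recurrence[OF k g_bound y_rec that] by (simp add: w_def \<alpha>_def)
  obtain C \<rho> where \<rho>: "0 < \<rho>" "\<rho> < 1" and C: "C \<ge> 0" and w_decay: "\<And>m. w m \<le> C * \<rho> ^ m"
    using recurrence_inequality_geometric_decay[OF k _ _ \<alpha>_sum w_rec] \<sigma>
    by (auto simp: w_def \<alpha>_def)
  have "norm (x (int (Suc n))) \<le> norm b * norm (x (int n)) + C * \<rho> ^ n" for n
  proof -
    have "x (int n + 1) = b * x (int n) + y (int n + 1)" unfolding y_def by simp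
    moreover have "int (Suc n) = int n + 1" "int (n + k) - int k + 1 = int n + 1" by simp_all
    ultimately have "x (int (Suc n)) = b * x (int n) + y (int (n + k) - int k + 1)" by (simp only:)
    then have "norm (x (int (Suc n))) \<le> norm b * norm (x (int n)) + w (n + k)"
      unfolding w_def by (simp only:) (intro norm_triangle_le add_mono norm_mult_ineq order_refl)
    moreover have "C * \<rho> ^ (n + k) \<le> C * \<rho> ^ n" using \<rho> C by (simp add: mult_left_mono power_decreasing)
    ultimately show ?thesis using w_decay[of "n + k"] by linarith
  qed
  then have "(\<lambda>n. norm (x (int n))) \<longlonglongrightarrow> 0"
    by (intro perturbed_contraction_tendsto_zero[of "norm b" \<rho> C]) (use b_small \<rho> C in auto)
  then show ?thesis by (simp add: tendsto_norm_zero_iff)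
qed

end
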